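(* Let $n\ge 2$ and $1\le k\le n-1$ be integers, $T>0$, and $t\in\{1,\dots,n\}$. Let $X_1,\dots,X_n$ be independent random variables each uniformly distributed on $[0,T]$, let $Y_{t,1}=X_t$ and $$Y_{t,2}=\min\Big(X_t,\ \max\big(\mathrm{mink}(\{X_i\}_{i\neq t})\big)\Big),$$ where $\max(\mathrm{mink}(\{X_i\}_{i\neq t}))$ denotes the $k$-th smallest of the $n-1$ values $X_i$, $i\ne t$. Then $$\Gamma_U:=\frac{E[Y_{t,1}]-E[Y_{t,2}]}{E[Y_{t,1}]}=\frac{(n-k)(n-k+1)}{n(n+1)}.$$
   Context: In an $(n,k,m)$ systematic MDS array code stored on $n$ nodes (any $k$ nodes recover all data), $X_i$ is the access latency of node $i$; $Y_{t,1}$ is the latency of directly accessing node $t$ (DA method) and $Y_{t,2}$ is the latency of the proposed accelerated access algorithms (AAKL/AAUL). $\Gamma_U$ is the relative reduction in expected latency. *)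

theory Defs
  imports "HOL-Probability.Probability"
begin

text \<open>The k-th smallest element (k counted from 1) of a list of reals,
  i.e. the maximum of the k smallest values (mink).\<close>
definition kth_smallest :: "nat \<Rightarrow> real list \<Rightarrow> real" where
  "kth_smallest k xs = sort xs ! (k - 1)"

end

theory Submission
  imports Defs
begin

(* For a nonnegative random variable W, E W is the integral of P(W > s) over s >= 0.
   The event Y2 > s says that X_t > s and that fewer than k of the other samples are <= s,
   so it depends only on the set of indices i with X_i <= s.  By independence each such set S
   has probability p^|S| (1 - p)^(n - |S|) with p = s/T, whence
   P(Y2 > s) = sum_{j<k} C(n-1, j) p^j (1 - p)^(n-j).  Integrating term by term with Beta
   integrals gives E Y2 = T sum_{j<k} (n - j) / (n (n + 1)), while E Y1 = T/2. *)

lemma sorted_nth_le_iff: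
  fixes ys :: "'a::linorder list"
  assumes "sorted ys" "i < length ys"
  shows "ys ! i \<le> s \<longleftrightarrow> i < length (filter (\<lambda>x. x \<le> s) ys)"
  using assms
proof (induction ys arbitrary: i)
  case Nil
  then show ?case by simp
next
  case (Cons y ys)
  show ?case
  proof (cases "y \<le> s")
    case True
    then show ?thesis using Cons by (cases i) auto
  next
    case False
    with Cons.prems have above: "\<forall>x\<in>set (y # ys). s < x" by auto
    then have "filter (\<lambda>x. x \<le> s) (y # ys) = []" by (auto simp: filter_empty_conv)
    moreover have "s < (y # ys) ! i" using above nth_mem[OF Cons.prems(2)] by blast
    ultimately show ?thesis by simp
  qed
qed

lemma kth_smallest_gt_iff:
  assumes "1 \<le> k" "k \<le> length xs"
  shows "s < kth_smallest k xs \<longleftrightarrow> length (filter (\<lambda>x. x \<le> s) xs) < k"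
proof -
  have "length (filter (\<lambda>x. x \<le> s) (sort xs)) = length (filter (\<lambda>x. x \<le> s) xs)"
    by (metis mset_filter mset_sort size_mset)
  moreover have "sort xs ! (k - 1) \<le> s \<longleftrightarrow> k - 1 < length (filter (\<lambda>x. x \<le> s) (sort xs))"
    using assms by (intro sorted_nth_le_iff) auto
  ultimately show ?thesis using assms unfolding kth_smallest_def by linarith
qed

lemma kth_smallest_map_gt_iff:
  assumes "distinct L" "1 \<le> k" "k \<le> length L"
  shows "s < kth_smallest k (map f L) \<longleftrightarrow> card {i \<in> set L. f i \<le> s} < k"
proof -
  have "length (filter (\<lambda>x. x \<le> s) (map f L)) = card {i \<in> set L. f i \<le> s}"
    using assms(1) by (simp add: filter_map comp_def distinct_length_filter Int_commute Collect_conj_eq)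
  then show ?thesis using kth_smallest_gt_iff[of k "map f L" s] assms(2,3) by simp
qed

lemma kth_smallest_in_set:
  assumes "1 \<le> k" "k \<le> length xs"
  shows "kth_smallest k xs \<in> set xs"
  using assms nth_mem[of "k - 1" "sort xs"] by (simp add: kth_smallest_def)

lemma sum_subsets_card_less:
  fixes f :: "nat \<Rightarrow> 'b::comm_semiring_1"
  assumes "finite J"
  shows "(\<Sum>S | S \<subseteq> J \<and> card S < k. f (card S)) = (\<Sum>j<k. of_nat (card J choose j) * f j)"
proof -
  have "(\<Sum>S | S \<subseteq> J \<and> card S < k. f (card S))
      = (\<Sum>j<k. \<Sum>S \<in> {S \<in> {S. S \<subseteq> J \<and> card S < k}. card S = j}. f (card S))"
    using assms by (intro sum.group[symmetric]) (auto intro: finite_subset[of _ "Pow J"])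
  also have "\<dots> = (\<Sum>j<k. \<Sum>S | S \<subseteq> J \<and> card S = j. f j)"
    by (intro sum.cong) auto
  also have "\<dots> = (\<Sum>j<k. of_nat (card J choose j) * f j)"
    using n_subsets[OF assms] by (intro sum.cong refl) simp
  finally show ?thesis .
qed

lemma min_kth_smallest_gt_iff:
  assumes "t \<in> I" "distinct L" "set L = I - {t}" "1 \<le> k" "k \<le> length L"
  shows "s < min (x t) (kth_smallest k (map x L))
     \<longleftrightarrow> {i \<in> I. x i \<in> {..s}} \<in> {S. S \<subseteq> I - {t} \<and> card S < k}"
proof -
  have "s < kth_smallest k (map x L) \<longleftrightarrow> card {i \<in> I - {t}. x i \<le> s} < k"
    using kth_smallest_map_gt_iff[OF assms(2,4,5)] assms(3) by simp
  moreover have "s < x t \<longleftrightarrow> {i \<in> I. x i \<le> s} \<subseteq> I - {t}"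
    using assms(1) by auto
  moreover have "s < x t \<Longrightarrow> {i \<in> I. x i \<le> s} = {i \<in> I - {t}. x i \<le> s}"
    by auto
  ultimately show ?thesis by auto
qed

lemma sets_hit_set_eq:
  assumes "finite I" "A \<in> sets N" "S \<subseteq> I" "\<And>i. i \<in> I \<Longrightarrow> X i \<in> measurable M N"
  shows "{\<omega> \<in> space M. {i \<in> I. X i \<omega> \<in> A} = S} \<in> sets M"
proof -
  have "{\<omega> \<in> space M. {i \<in> I. X i \<omega> \<in> A} = S} = {\<omega> \<in> space M. \<forall>i\<in>I. X i \<omega> \<in> A \<longleftrightarrow> i \<in> S}"
    using assms(3) by auto
  also have "\<dots> \<in> sets M"
    using assms(1,2,4) by measurable
  finally show ?thesis .
qed

lemma sets_hit_set_mem: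
  assumes "finite I" "A \<in> sets N" "SS \<subseteq> Pow I" "\<And>i. i \<in> I \<Longrightarrow> X i \<in> measurable M N"
  shows "{\<omega> \<in> space M. {i \<in> I. X i \<omega> \<in> A} \<in> SS} \<in> sets M"
proof -
  have "finite SS" using assms(1,3) by (meson finite_Pow_iff finite_subset)
  have "{\<omega> \<in> space M. {i \<in> I. X i \<omega> \<in> A} \<in> SS} = (\<Union>S\<in>SS. {\<omega> \<in> space M. {i \<in> I. X i \<omega> \<in> A} = S})"
    by auto
  also have "\<dots> \<in> sets M"
    using \<open>finite SS\<close> assms(3) sets_hit_set_eq[OF assms(1,2) _ assms(4)] by (intro sets.finite_UN) auto
  finally show ?thesis .
qed

lemma (in prob_space) prob_indep_vars_hit_set_eq:
  assumes "finite I" "indep_vars (\<lambda>_. N) X I" "A \<in> sets N"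
    and "\<And>i. i \<in> I \<Longrightarrow> prob (X i -` A \<inter> space M) = p" and "S \<subseteq> I"
  shows "prob {\<omega> \<in> space M. {i \<in> I. X i \<omega> \<in> A} = S} = p ^ card S * (1 - p) ^ (card I - card S)"
proof (cases "I = {}")
  case True
  then show ?thesis using assms(5) by (simp add: prob_space)
next
  case False
  define B where "B i = (if i \<in> S then A else space N - A)" for i
  have X: "\<And>i. i \<in> I \<Longrightarrow> X i \<in> measurable M N"
    using assms(2) by (simp add: indep_vars_def)
  have "{\<omega> \<in> space M. {i \<in> I. X i \<omega> \<in> A} = S} = {\<omega> \<in> space M. \<forall>i\<in>I. X i \<omega> \<in> B i}"
    using assms(5) measurable_space[OF X] by (auto simp: B_def)
  also have "\<dots> = (\<Inter>i\<in>I. X i -` B i \<inter> space M)"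
    using False by auto
  also have "prob \<dots> = (\<Prod>i\<in>I. prob (X i -` B i \<inter> space M))"
    using False assms(1,3) by (intro indep_varsD[OF assms(2)]) (auto simp: B_def)
  also have "\<dots> = (\<Prod>i\<in>I. if i \<in> S then p else 1 - p)"
  proof (intro prod.cong refl)
    fix i assume "i \<in> I"
    then have "X i -` (space N - A) \<inter> space M = space M - (X i -` A \<inter> space M)"
      using measurable_space[OF X] by auto
    then show "prob (X i -` B i \<inter> space M) = (if i \<in> S then p else 1 - p)"
      using \<open>i \<in> I\<close> X assms(3,4) by (simp add: B_def prob_compl measurable_sets)
  qed
  also have "\<dots> = p ^ card S * (1 - p) ^ (card I - card S)"
    using assms(1,5) by (simp add: prod.If_cases Int_absorb1 Diff_eq[symmetric] card_Diff_subset finite_subset)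
  finally show ?thesis .
qed

lemma (in prob_space) prob_indep_vars_hit_set_mem:
  assumes "finite I" "indep_vars (\<lambda>_. N) X I" "A \<in> sets N"
    and "\<And>i. i \<in> I \<Longrightarrow> prob (X i -` A \<inter> space M) = p" and "SS \<subseteq> Pow I"
  shows "prob {\<omega> \<in> space M. {i \<in> I. X i \<omega> \<in> A} \<in> SS}
       = (\<Sum>S\<in>SS. p ^ card S * (1 - p) ^ (card I - card S))"
proof -
  define E where "E S = {\<omega> \<in> space M. {i \<in> I. X i \<omega> \<in> A} = S}" for S
  have "finite SS" using assms(1,5) by (meson finite_Pow_iff finite_subset)
  have X: "\<And>i. i \<in> I \<Longrightarrow> X i \<in> measurable M N"
    using assms(2) by (simp add: indep_vars_def)
  have "prob (\<Union>S\<in>SS. E S) = (\<Sum>S\<in>SS. prob (E S))"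
    using \<open>finite SS\<close> assms(5) sets_hit_set_eq[OF assms(1,3) _ X]
    by (intro finite_measure_finite_Union) (auto simp: disjoint_family_on_def E_def)
  also have "\<dots> = (\<Sum>S\<in>SS. p ^ card S * (1 - p) ^ (card I - card S))"
    using prob_indep_vars_hit_set_eq[OF assms(1-4)] assms(5) by (auto simp: E_def intro!: sum.cong)
  also have "(\<Union>S\<in>SS. E S) = {\<omega> \<in> space M. {i \<in> I. X i \<omega> \<in> A} \<in> SS}"
    by (auto simp: E_def)
  finally show ?thesis .
qed

lemma has_integral_power_mult_power_01:
  "((\<lambda>u::real. u ^ a * (1 - u) ^ b) has_integral (fact a * fact b / fact (a + b + 1))) {0..1}"
proof -
  have "((\<lambda>u. u powr (real a + 1 - 1) * (1 - u) powr (real b + 1 - 1))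
      has_integral Beta (real a + 1) (real b + 1)) {0..1}"
    by (rule has_integral_Beta_real) auto
  moreover have "Beta (real a + 1) (real b + 1) = fact a * fact b / fact (a + b + 1)"
  proof -
    have "Gamma (real m + 1) = fact m" for m
      using Gamma_fact[of m] by (simp add: add.commute)
    from this[of a] this[of b] this[of "a + b + 1"] show ?thesis
      by (simp add: Beta_def add_ac)
  qed
  ultimately have "((\<lambda>u. u powr real a * (1 - u) powr real b)
      has_integral (fact a * fact b / fact (a + b + 1))) {0..1}"
    by simp
  then show ?thesis
    by (rule has_integral_spike_finite[of "{0, 1}", rotated 2]) (auto simp: powr_realpow)
qed

lemma has_integral_power_mult_power_scaled:
  fixes T :: real
  assumes "T > 0"
  shows "((\<lambda>s. (s / T) ^ a * ((T - s) / T) ^ b) has_integral T * (fact a * fact b / fact (a + b + 1))) {0..T}"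
proof -
  have "((\<lambda>s::real. (\<lambda>u. u ^ a * (1 - u) ^ b) ((1 / T) *\<^sub>R s + 0))
      has_integral (fact a * fact b / fact (a + b + 1)) /\<^sub>R (1 / T) ^ DIM(real))
      (cbox ((0 - 0) /\<^sub>R (1 / T)) ((1 - 0) /\<^sub>R (1 / T)))"
    using has_integral_power_mult_power_01 assms by (intro has_integral_affinity') auto
  moreover have "(\<lambda>s::real. (\<lambda>u. u ^ a * (1 - u) ^ b) ((1 / T) *\<^sub>R s + 0)) = (\<lambda>s. (s / T) ^ a * ((T - s) / T) ^ b)"
    using assms by (auto simp: field_simps)
  ultimately show ?thesis by (simp add: mult.commute)
qed

lemma (in prob_space) nn_integral_eq_tail_prob:
  assumes W[measurable]: "W \<in> borel_measurable M"
  shows "(\<integral>\<^sup>+\<omega>. ennreal (W \<omega>) \<partial>M) =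
         (\<integral>\<^sup>+s. indicator {0..} s * ennreal (prob {\<omega>\<in>space M. s < W \<omega>}) \<partial>lborel)"
proof -
  interpret P: pair_sigma_finite M lborel
    by (rule pair_sigma_finite.intro[OF prob_space_imp_sigma_finite[OF prob_space_axioms]])
       (rule lborel.sigma_finite_measure_axioms)
  have "(\<integral>\<^sup>+\<omega>. ennreal (W \<omega>) \<partial>M) =
        (\<integral>\<^sup>+\<omega>. (\<integral>\<^sup>+s. indicator {0..} s * indicator {\<omega>\<in>space M. s < W \<omega>} \<omega> \<partial>lborel) \<partial>M)"
  proof (rule nn_integral_cong)
    fix \<omega> assume \<omega>: "\<omega> \<in> space M"
    have "(\<integral>\<^sup>+s. indicator {0..} s * indicator {\<omega>\<in>space M. s < W \<omega>} \<omega> \<partial>lborel)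
          = (\<integral>\<^sup>+s. indicator {0..<W \<omega>} s \<partial>lborel)"
      using \<omega> by (intro nn_integral_cong) (auto split: split_indicator)
    also have "\<dots> = emeasure lborel {0..<W \<omega>}" by simp
    also have "\<dots> = ennreal (W \<omega>)"
      by (cases "0 \<le> W \<omega>") (auto simp: ennreal_neg)
    finally show "ennreal (W \<omega>) = (\<integral>\<^sup>+s. indicator {0..} s * indicator {\<omega>\<in>space M. s < W \<omega>} \<omega> \<partial>lborel)"
      by simp
  qed
  also have "\<dots> = (\<integral>\<^sup>+s. (\<integral>\<^sup>+\<omega>. indicator {0..} s * indicator {\<omega>\<in>space M. s < W \<omega>} \<omega> \<partial>M) \<partial>lborel)"
    by (rule P.Fubini'[symmetric]) measurable
  also have "\<dots> = (\<integral>\<^sup>+s. indicator {0..} s * ennreal (prob {\<omega>\<in>space M. s < W \<omega>}) \<partial>lborel)"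
  proof (rule nn_integral_cong)
    fix s :: real
    have "(\<integral>\<^sup>+\<omega>. indicator {0..} s * indicator {\<omega>\<in>space M. s < W \<omega>} \<omega> \<partial>M)
        = indicator {0..} s * emeasure M {\<omega>\<in>space M. s < W \<omega>}"
      by (subst nn_integral_cmult) auto
    then show "(\<integral>\<^sup>+\<omega>. indicator {0..} s * indicator {\<omega>\<in>space M. s < W \<omega>} \<omega> \<partial>M) =
        indicator {0..} s * ennreal (prob {\<omega>\<in>space M. s < W \<omega>})"
      by (simp add: emeasure_eq_measure)
  qed
  finally show ?thesis .
qed

lemma (in prob_space) integral_eq_tail_prob_integral:
  fixes W :: "'a \<Rightarrow> real" and g :: "real \<Rightarrow> real"
  assumes W[measurable]: "W \<in> borel_measurable M"
    and W_nonneg: "AE \<omega> in M. 0 \<le> W \<omega>"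
    and g_integral: "(g has_integral J) {0..T}" and g_nonneg: "\<And>s. s \<in> {0..T} \<Longrightarrow> 0 \<le> g s"
    and tail_prob: "\<And>s. 0 \<le> s \<Longrightarrow> s \<le> T \<Longrightarrow> prob {\<omega>\<in>space M. s < W \<omega>} = g s"
    and tail_prob_beyond: "\<And>s. T < s \<Longrightarrow> prob {\<omega>\<in>space M. s < W \<omega>} = 0"
  shows "integral\<^sup>L M W = J"
proof -
  have "integral\<^sup>L M W = enn2real (\<integral>\<^sup>+\<omega>. ennreal (W \<omega>) \<partial>M)"
    by (rule integral_eq_nn_integral[OF W W_nonneg])
  also have "(\<integral>\<^sup>+\<omega>. ennreal (W \<omega>) \<partial>M) =
         (\<integral>\<^sup>+s. indicator {0..} s * ennreal (prob {\<omega>\<in>space M. s < W \<omega>}) \<partial>lborel)"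
    by (rule nn_integral_eq_tail_prob[OF W])
  also have "\<dots> = (\<integral>\<^sup>+s. ennreal (indicator {0..T} s * g s) \<partial>lborel)"
    using tail_prob tail_prob_beyond by (intro nn_integral_cong) (auto simp: indicator_def not_le)
  also have "\<dots> = ennreal J"
    by (rule nn_integral_has_integral_lebesgue[OF g_nonneg g_integral])
  finally show ?thesis
    using has_integral_nonneg[OF g_integral g_nonneg] by simp
qed

lemma binomial_mult_beta_eq:
  assumes "j < n"
  shows "real (n - 1 choose j) * (fact j * fact (n - j) / fact (j + (n - j) + 1))
       = real (n - j) / real (n * (n + 1))"
proof -
  obtain m where n: "n = Suc m" and "j \<le> m" using assms by (cases n) auto
  have binomial: "fact j * fact (m - j) * real (m choose j) = fact m"
    using binomial_fact_lemma[OF \<open>j \<le> m\<close>] by (metis of_nat_fact of_nat_mult)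
  have "fact (n - j) = real (n - j) * (fact (m - j) :: real)"
    using \<open>j \<le> m\<close> by (simp add: n Suc_diff_le)
  moreover have "fact (j + (n - j) + 1) = real (n * (n + 1)) * (fact m :: real)"
    using \<open>j \<le> m\<close> by (simp add: n algebra_simps)
  ultimately have "real (n - 1 choose j) * (fact j * fact (n - j) / fact (j + (n - j) + 1))
      = (fact j * fact (m - j) * real (m choose j)) * real (n - j) / (real (n * (n + 1)) * fact m)"
    by (simp add: n ac_simps)
  also have "\<dots> = real (n - j) / real (n * (n + 1))"
    unfolding binomial by simp
  finally show ?thesis .
qed

lemma double_sum_diff_lessThan:
  fixes k n :: nat
  assumes "k \<le> n"
  shows "2 * (\<Sum>j<k. n - j) + (n - k) * (n - k + 1) = n * (n + 1)"
  using assms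
proof (induction k)
  case 0
  then show ?case by simp
next
  case (Suc k)
  then obtain m where "n = Suc k + m" by (metis le_add_diff_inverse)
  with Suc show ?case by (simp add: algebra_simps)
qed

lemma sum_binomial_beta_eq:
  fixes T :: real
  assumes "k < n"
  shows "(\<Sum>j<k. real (n - 1 choose j) * (T * (fact j * fact (n - j) / fact (j + (n - j) + 1))))
       = T / 2 * (1 - real ((n - k) * (n - k + 1)) / real (n * (n + 1)))"
proof -
  define Sg N R where "Sg = (\<Sum>j<k. real (n - j))"
    and "N = real (n * (n + 1))" and "R = real ((n - k) * (n - k + 1))"
  have "(\<Sum>j<k. real (n - 1 choose j) * (T * (fact j * fact (n - j) / fact (j + (n - j) + 1))))
      = (\<Sum>j<k. T * (real (n - j) / N))"
  proof (intro sum.cong refl)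
    fix j assume "j \<in> {..<k}"
    then have "j < n" using assms by simp
    then show "real (n - 1 choose j) * (T * (fact j * fact (n - j) / fact (j + (n - j) + 1)))
        = T * (real (n - j) / N)"
      using binomial_mult_beta_eq[of j n] unfolding N_def by (metis mult.left_commute)
  qed
  also have "\<dots> = T * (Sg / N)"
    by (simp add: Sg_def sum_distrib_left sum_divide_distrib)
  also have "\<dots> = T / 2 * (1 - R / N)"
  proof -
    have "2 * Sg + R = N"
      unfolding Sg_def N_def R_def using double_sum_diff_lessThan[of k n] assms
      by (metis (mono_tags) of_nat_add of_nat_mult of_nat_numeral of_nat_sum less_imp_le)
    moreover have "N > 0" unfolding N_def using assms by (simp del: of_nat_mult)
    ultimately show ?thesis by (simp add: field_simps flip: \<open>2 * Sg + R = N\<close>)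
  qed
  finally show ?thesis unfolding R_def N_def .
qed

locale indep_uniform_sample = prob_space +
  fixes I :: "'i set" and X :: "'i \<Rightarrow> 'a \<Rightarrow> real" and T :: real
  assumes finite_I: "finite I"
    and indep: "indep_vars (\<lambda>_. borel) X I"
    and uniform: "\<And>i. i \<in> I \<Longrightarrow> distr M borel (X i) = uniform_measure lborel {0..T}"
    and T_pos: "0 < T"
begin

lemma X_measurable: "i \<in> I \<Longrightarrow> X i \<in> borel_measurable M"
  using indep by (simp add: indep_vars_def)

lemma prob_X_in:
  assumes "i \<in> I" "A \<in> sets borel"
  shows "prob (X i -` A \<inter> space M) = measure lborel ({0..T} \<inter> A) / T"
proof -
  have "prob (X i -` A \<inter> space M) = measure (distr M borel (X i)) A"
    using assms X_measurable by (simp add: measure_distr)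
  also have "\<dots> = measure lborel ({0..T} \<inter> A) / T"
    unfolding uniform[OF assms(1)] using T_pos assms(2) by (subst measure_uniform_measure) auto
  finally show ?thesis .
qed

lemma prob_X_le:
  assumes "i \<in> I" "0 \<le> s" "s \<le> T"
  shows "prob (X i -` {..s} \<inter> space M) = s / T"
proof -
  have "{0..T} \<inter> {..s} = {0..s}" using assms(3) by auto
  then show ?thesis using prob_X_in[OF assms(1), of "{..s}"] assms(2) by simp
qed

lemma prob_X_gt:
  assumes "i \<in> I" "0 \<le> s" "s \<le> T"
  shows "prob {\<omega> \<in> space M. s < X i \<omega>} = (T - s) / T"
proof -
  have "{0..T} \<inter> {s<..} = {s<..T}" using assms(2) by auto
  moreover have "{\<omega> \<in> space M. s < X i \<omega>} = X i -` {s<..} \<inter> space M" by auto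
  ultimately show ?thesis using prob_X_in[OF assms(1), of "{s<..}"] assms(3) by simp
qed

lemma prob_X_gt_T:
  assumes "i \<in> I" "T < s"
  shows "prob {\<omega> \<in> space M. s < X i \<omega>} = 0"
proof -
  have "{0..T} \<inter> {s<..} = {}" using assms(2) by auto
  moreover have "{\<omega> \<in> space M. s < X i \<omega>} = X i -` {s<..} \<inter> space M" by auto
  ultimately show ?thesis using prob_X_in[OF assms(1), of "{s<..}"] by simp
qed

lemma AE_X_nonneg: "AE \<omega> in M. \<forall>i\<in>I. 0 \<le> X i \<omega>"
proof (rule AE_finite_allI[OF finite_I])
  fix i assume "i \<in> I"
  have "AE x in uniform_measure lborel {0..T}. 0 \<le> x"
    by (rule AE_uniform_measureI) auto
  then have "AE x in distr M borel (X i). 0 \<le> x"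
    by (simp only: uniform[OF \<open>i \<in> I\<close>])
  then show "AE \<omega> in M. 0 \<le> X i \<omega>"
    by (rule AE_distrD[rotated]) (use X_measurable \<open>i \<in> I\<close> in simp)
qed

lemma expectation_X:
  assumes "i \<in> I"
  shows "expectation (X i) = T / 2"
proof (rule integral_eq_tail_prob_integral)
  show "((\<lambda>s. (T - s) / T) has_integral T / 2) {0..T}"
    using has_integral_power_mult_power_scaled[OF T_pos, of 0 1] by simp
qed (use assms X_measurable AE_X_nonneg prob_X_gt prob_X_gt_T T_pos in \<open>auto elim: AE_mp\<close>)

context
  fixes t :: 'i and L :: "'i list" and k :: nat
  assumes t: "t \<in> I" and L: "distinct L" "set L = I - {t}" and k: "1 \<le> k" "k \<le> length L"
begin

lemma min_kth_smallest_event: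
  "{\<omega> \<in> space M. s < min (X t \<omega>) (kth_smallest k (map (\<lambda>i. X i \<omega>) L))}
   = {\<omega> \<in> space M. {i \<in> I. X i \<omega> \<in> {..s}} \<in> {S. S \<subseteq> I - {t} \<and> card S < k}}"
proof (intro Collect_cong conj_cong refl)
  fix \<omega>
  show "s < min (X t \<omega>) (kth_smallest k (map (\<lambda>i. X i \<omega>) L))
     \<longleftrightarrow> {i \<in> I. X i \<omega> \<in> {..s}} \<in> {S. S \<subseteq> I - {t} \<and> card S < k}"
    using min_kth_smallest_gt_iff[OF t L k, of s "\<lambda>i. X i \<omega>"] by simp
qed

lemma min_kth_smallest_measurable:
  "(\<lambda>\<omega>. min (X t \<omega>) (kth_smallest k (map (\<lambda>i. X i \<omega>) L))) \<in> borel_measurable M"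
  unfolding borel_measurable_iff_greater min_kth_smallest_event
  using finite_I X_measurable by (intro allI sets_hit_set_mem[where N = borel]) auto

lemma prob_min_kth_smallest_gt:
  assumes "0 \<le> s" "s \<le> T"
  shows "prob {\<omega> \<in> space M. s < min (X t \<omega>) (kth_smallest k (map (\<lambda>i. X i \<omega>) L))}
       = (\<Sum>j<k. real (card I - 1 choose j) * ((s / T) ^ j * ((T - s) / T) ^ (card I - j)))"
proof -
  have "1 - s / T = (T - s) / T" using T_pos by (simp add: field_simps)
  then have "prob {\<omega> \<in> space M. {i \<in> I. X i \<omega> \<in> {..s}} \<in> {S. S \<subseteq> I - {t} \<and> card S < k}}
      = (\<Sum>S | S \<subseteq> I - {t} \<and> card S < k. (s / T) ^ card S * ((T - s) / T) ^ (card I - card S))"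
    using assms prob_X_le by (subst prob_indep_vars_hit_set_mem[OF finite_I indep]) auto
  also have "\<dots> = (\<Sum>j<k. real (card I - 1 choose j) * ((s / T) ^ j * ((T - s) / T) ^ (card I - j)))"
    using sum_subsets_card_less[of "I - {t}"] finite_I t by simp
  finally show ?thesis unfolding min_kth_smallest_event .
qed

lemma expectation_min_kth_smallest:
  "expectation (\<lambda>\<omega>. min (X t \<omega>) (kth_smallest k (map (\<lambda>i. X i \<omega>) L)))
   = T / 2 * (1 - real ((card I - k) * (card I - k + 1)) / real (card I * (card I + 1)))"
proof -
  define n where "n = card I"
  define g where "g s = (\<Sum>j<k. real (n - 1 choose j) * ((s / T) ^ j * ((T - s) / T) ^ (n - j)))" for s
  have "length L = n - 1"
    using L t finite_I distinct_card[OF L(1)] by (simp add: n_def)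
  then have "k < n" using k by linarith
  have "expectation (\<lambda>\<omega>. min (X t \<omega>) (kth_smallest k (map (\<lambda>i. X i \<omega>) L)))
      = (\<Sum>j<k. real (n - 1 choose j) * (T * (fact j * fact (n - j) / fact (j + (n - j) + 1))))"
  proof (rule integral_eq_tail_prob_integral[where g = g])
    show "(\<lambda>\<omega>. min (X t \<omega>) (kth_smallest k (map (\<lambda>i. X i \<omega>) L))) \<in> borel_measurable M"
      by (rule min_kth_smallest_measurable)
    show "AE \<omega> in M. 0 \<le> min (X t \<omega>) (kth_smallest k (map (\<lambda>i. X i \<omega>) L))"
      using AE_X_nonneg
    proof eventually_elim
      case (elim \<omega>)
      then show ?case
        using kth_smallest_in_set[of k "map (\<lambda>i. X i \<omega>) L"] k L t by auto
    qed
    show "(g has_integral (\<Sum>j<k. real (n - 1 choose j) * (T * (fact j * fact (n - j) / fact (j + (n - j) + 1))))) {0..T}"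
      unfolding g_def
      by (intro has_integral_sum finite_lessThan has_integral_mult_right has_integral_power_mult_power_scaled T_pos)
    show "0 \<le> g s" if "s \<in> {0..T}" for s
      using that unfolding g_def by (intro sum_nonneg) auto
    show "prob {\<omega> \<in> space M. s < min (X t \<omega>) (kth_smallest k (map (\<lambda>i. X i \<omega>) L))} = g s"
      if "0 \<le> s" "s \<le> T" for s
      using prob_min_kth_smallest_gt[OF that] by (simp add: g_def n_def)
    show "prob {\<omega> \<in> space M. s < min (X t \<omega>) (kth_smallest k (map (\<lambda>i. X i \<omega>) L))} = 0"
      if "T < s" for s
    proof -
      have "prob {\<omega> \<in> space M. s < min (X t \<omega>) (kth_smallest k (map (\<lambda>i. X i \<omega>) L))}
          \<le> prob {\<omega> \<in> space M. s < X t \<omega>}"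
        using X_measurable[OF t] by (intro finite_measure_mono) auto
      then show ?thesis using prob_X_gt_T[OF t that] measure_nonneg[of M] by (metis order_antisym)
    qed
  qed
  then show ?thesis
    using sum_binomial_beta_eq[OF \<open>k < n\<close>] by (simp add: n_def)
qed

end

end

theorem corollary5:
  fixes M :: "'a measure" and X :: "nat \<Rightarrow> 'a \<Rightarrow> real"
    and n k t :: nat and T :: real
  assumes "prob_space M"
    and "n \<ge> 2" and "1 \<le> k" and "k \<le> n - 1"
    and "T > 0" and "t \<in> {1..n}"
    and "\<And>i. i \<in> {1..n} \<Longrightarrow> X i \<in> borel_measurable M"
    and "prob_space.indep_vars M (\<lambda>_. borel) X {1..n}"
    and "\<And>i. i \<in> {1..n} \<Longrightarrow> distr M borel (X i) = uniform_measure lborel {0..T}"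
  shows "(let Y1 = (\<lambda>\<omega>. X t \<omega>);
              Y2 = (\<lambda>\<omega>. min (X t \<omega>)
                     (kth_smallest k (map (\<lambda>i. X i \<omega>) (filter (\<lambda>i. i \<noteq> t) [1..<n+1]))))
          in ((integral\<^sup>L M Y1 - integral\<^sup>L M Y2) / integral\<^sup>L M Y1))
         = real ((n - k) * (n - k + 1)) / real (n * (n + 1))"
proof -
  interpret indep_uniform_sample M "{1..n}" X T
    using assms by (intro indep_uniform_sample.intro indep_uniform_sample_axioms.intro) auto
  define L where "L = filter (\<lambda>i. i \<noteq> t) [1..<n+1]"
  have L: "distinct L" "set L = {1..n} - {t}"
    by (auto simp: L_def)
  moreover have "length L = n - 1"
    using distinct_card[OF L(1)] L(2) assms(6) by simp
  ultimately have E2: "expectation (\<lambda>\<omega>. min (X t \<omega>) (kth_smallest k (map (\<lambda>i. X i \<omega>) L)))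
      = T / 2 * (1 - real ((n - k) * (n - k + 1)) / real (n * (n + 1)))"
    using expectation_min_kth_smallest[OF assms(6) L] assms(3,4) by simp
  have E1: "expectation (X t) = T / 2"
    using expectation_X[OF assms(6)] .
  have "(T / 2 - T / 2 * (1 - r)) / (T / 2) = r" for r :: real
    using assms(5) by (simp add: field_simps)
  then show ?thesis
    unfolding Let_def L_def[symmetric] E1 E2 .
qed

end
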